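(* Let $\lambda<\kappa$ be infinite cardinals with $\kappa$ regular and $2^\lambda=2^\kappa$. Then for every $A\subseteq\kappa^\kappa$ there is a closed set $C\subseteq\kappa^\kappa\times2^\kappa$ such that $A=\{f\in\kappa^\kappa\mid\exists g\in2^\kappa\,((f,g)\in C)\}$.
   Context: $\kappa^\kappa$ and $2^\kappa$ carry the usual (bounded) topology generated by the sets $\{\zeta\mid\eta\subseteq\zeta\}$ for $\eta$ a function with domain some ordinal $\alpha<\kappa$ (into $\kappa$, resp. $\{0,1\}$); $\kappa^\kappa\times2^\kappa$ carries the product topology, and "closed" refers to this topology. *)

theory Defs
  imports "HOL-Analysis.Analysis"
begin

text \<open>The cardinal kappa is represented by a cardinal (initial-ordinal) well-order r
  on the universe of a type 'k; the ordinals below kappa are the elements of 'k,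
  and an ordinal alpha < kappa is the strict initial segment underS r a.\<close>

definition bounded_topology :: "'k rel \<Rightarrow> ('k \<Rightarrow> 'b) topology" where
  "bounded_topology r = topology_generated_by
     {{\<zeta>. \<forall>x \<in> underS r a. \<zeta> x = \<eta> x} | a \<eta>. a \<in> Field r}"

end

theory Submission
  imports Defs
begin

text \<open>Since \<open>|\<kappa>\<^sup>\<kappa>| \<le> 2\<^sup>\<kappa> = 2\<^sup>\<lambda>\<close>, every \<open>f \<in> \<kappa>\<^sup>\<kappa>\<close> can be coded injectively by a subset
  \<open>e f\<close> of an initial segment \<open>U\<close> of \<kappa> of size \<lambda>. Take \<open>C\<close> to be the set of pairs \<open>(f, g)\<close>
  with \<open>f \<in> A\<close> and \<open>g\<close> the characteristic function of \<open>e f\<close> on \<open>U\<close>. Its projection is \<open>A\<close>,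
  and it is closed: if \<open>(f, g) \<notin> C\<close>, then any \<open>f' \<in> A\<close> coded by \<open>g\<restriction>U\<close> differs from \<open>f\<close>;
  fixing \<open>g\<restriction>U\<close> together with \<open>f\<close> on a bounded set where \<open>f\<close> differs from \<open>f'\<close> gives
  a basic neighbourhood of \<open>(f, g)\<close> disjoint from \<open>C\<close>.\<close>

lemma topspace_bounded_topology:
  assumes "Field r \<noteq> {}"
  shows "topspace (bounded_topology r) = UNIV"
  using assms unfolding bounded_topology_def topology_generated_by_topspace by blast

lemma openin_bounded_topology_basic:
  assumes "a \<in> Field r"
  shows "openin (bounded_topology r) {\<zeta>. \<forall>x \<in> underS r a. \<zeta> x = \<eta> x}"
  unfolding bounded_topology_def
  by (rule topology_generated_by_Basis) (use assms in auto)

lemma bounded_topology_separates: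
  fixes f f' :: "'k \<Rightarrow> 'b" and r :: "'k rel"
  assumes "Card_order r" "Field r = UNIV" "infinite (UNIV :: 'k set)" "f \<noteq> f'"
  shows "\<exists>T. openin (bounded_topology r) T \<and> f \<in> T \<and> f' \<notin> T"
proof -
  obtain \<alpha> where differ: "f \<alpha> \<noteq> f' \<alpha>"
    using assms(4) by (metis ext)
  obtain b where "\<alpha> \<noteq> b" "(\<alpha>, b) \<in> r"
    using infinite_Card_order_limit[OF assms(1)] assms(2,3) by auto
  then have "\<alpha> \<in> underS r b"
    by (simp add: underS_def)
  then show ?thesis
    using differ openin_bounded_topology_basic[of b r f] assms(2) by force
qed

lemma closedin_coded_graph:
  fixes r :: "'k rel" and A :: "('k \<Rightarrow> 'b) set" and code :: "('k \<Rightarrow> 'b) \<Rightarrow> 'k \<Rightarrow> 'c"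
  assumes "Card_order r" "Field r = UNIV" "infinite (UNIV :: 'k set)"
    and code_inj: "\<And>f f'. \<forall>x \<in> underS r a. code f x = code f' x \<Longrightarrow> f = f'"
  shows "closedin (prod_topology (bounded_topology r) (bounded_topology r))
           {(f, g). f \<in> A \<and> (\<forall>x \<in> underS r a. g x = code f x)}"
    (is "closedin ?X ?C")
proof -
  have "\<exists>W. openin ?X W \<and> (f, g) \<in> W \<and> W \<subseteq> - ?C" if notC: "(f, g) \<notin> ?C" for f g
  proof -
    define V where "V = {\<zeta>. \<forall>x \<in> underS r a. \<zeta> x = g x}"
    have V: "openin (bounded_topology r) V" "g \<in> V"
      unfolding V_def by (auto intro: openin_bounded_topology_basic simp: assms(2))
    show ?thesis
    proof (cases "\<exists>f' \<in> A. \<forall>x \<in> underS r a. g x = code f' x")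
      case True
      then obtain f' where f': "f' \<in> A" "\<forall>x \<in> underS r a. g x = code f' x"
        by blast
      with notC have "f \<noteq> f'"
        by auto
      then obtain T where T: "openin (bounded_topology r) T" "f \<in> T" "f' \<notin> T"
        using bounded_topology_separates[OF assms(1-3)] by blast
      have "f'' = f'" if "g'' \<in> V" "\<forall>x \<in> underS r a. g'' x = code f'' x" for f'' g''
        using that f'(2) code_inj unfolding V_def by simp
      then have "T \<times> V \<subseteq> - ?C"
        using T(3) by blast
      moreover have "openin ?X (T \<times> V)"
        using T(1) V(1) by (simp add: openin_prod_Times_iff)
      ultimately show ?thesis
        using T(2) V(2) by blast
    next
      case False
      then have "UNIV \<times> V \<subseteq> - ?C"
        unfolding V_def by auto
      moreover have "openin ?X (UNIV \<times> V)"
        using V(1) openin_topspace[of "bounded_topology r :: ('k \<Rightarrow> 'b) topology"]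
        by (simp add: openin_prod_Times_iff topspace_bounded_topology assms(2))
      ultimately show ?thesis
        using V(2) by blast
    qed
  qed
  then have "openin ?X (- ?C)"
    by (subst openin_subopen) blast
  then show ?thesis
    unfolding closedin_def
    by (simp add: topspace_bounded_topology assms(2) Compl_eq_Diff_UNIV)
qed

lemma ordLess_imp_bij_betw_underS:
  assumes "Well_order r" "(card_of L, r) \<in> ordLess"
  shows "\<exists>a \<in> Field r. \<exists>h. bij_betw h L (underS r a)"
proof -
  obtain a where a: "a \<in> Field r" and iso: "(card_of L, Restr r (underS r a)) \<in> ordIso"
    using ordLess_iff_ordIso_Restr[OF assms(1) card_of_Well_order] assms(2) by blast
  have "Field (Restr r (underS r a)) = underS r a"
    by (rule Refl_Field_Restr2)
       (use assms(1) in \<open>auto simp: order_on_defs underS_def Field_def\<close>)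
  with iso a show ?thesis
    unfolding ordIso_def iso_def by (auto simp: Field_card_of)
qed

lemma inj_graph: "inj (\<lambda>f. range (\<lambda>x. (x, f x)))"
proof (rule injI)
  fix f g :: "'a \<Rightarrow> 'b"
  assume "range (\<lambda>x. (x, f x)) = range (\<lambda>x. (x, g x))"
  then have "(x, f x) \<in> range (\<lambda>x. (x, g x))" for x
    by blast
  then show "f = g"
    by auto
qed

lemma ex_inj_fun_Pow:
  assumes "infinite (UNIV :: 'k set)"
  shows "\<exists>e :: ('k \<Rightarrow> 'k) \<Rightarrow> 'k set. inj e"
proof -
  obtain q where "bij_betw q (UNIV \<times> UNIV :: ('k \<times> 'k) set) (UNIV :: 'k set)"
    using card_of_Times_same_infinite[OF assms] card_of_ordIso by blast
  then have "inj (image q)"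
    using inj_on_image_Pow[of q UNIV] by (simp add: bij_betw_def)
  then have "inj (image q \<circ> (\<lambda>f :: 'k \<Rightarrow> 'k. range (\<lambda>x. (x, f x))))"
    using inj_graph by (rule inj_compose)
  then show ?thesis
    by blast
qed

lemma ex_inj_fun_Pow_underS:
  fixes r :: "'k rel" and L :: "'l set"
  assumes "Card_order r" "infinite (UNIV :: 'k set)" "(card_of L, r) \<in> ordLess"
    and "(card_of (Pow L), card_of (Pow (UNIV :: 'k set))) \<in> ordIso"
  shows "\<exists>a \<in> Field r. \<exists>e :: ('k \<Rightarrow> 'k) \<Rightarrow> 'k set. inj e \<and> (\<forall>f. e f \<subseteq> underS r a)"
proof -
  obtain a h where a: "a \<in> Field r" and h: "bij_betw h L (underS r a)"
    using ordLess_imp_bij_betw_underS[OF _ assms(3)] assms(1) card_order_on_well_order_on by blast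
  have hP: "bij_betw (image h) (Pow L) (Pow (underS r a))"
    using h by (rule bij_betw_Pow)
  obtain p where p: "bij_betw p (Pow (UNIV :: 'k set)) (Pow L)"
    using assms(4) card_of_ordIso ordIso_symmetric by blast
  obtain e0 :: "('k \<Rightarrow> 'k) \<Rightarrow> 'k set" where e0: "inj e0"
    using ex_inj_fun_Pow[OF assms(2)] by blast
  have "inj (p \<circ> e0)"
    using inj_compose[of p e0] e0 bij_betw_imp_inj_on[OF p] by simp
  moreover have "range (p \<circ> e0) \<subseteq> Pow L"
    using bij_betw_apply[OF p] by auto
  ultimately have "inj (image h \<circ> (p \<circ> e0))"
    using bij_betw_imp_inj_on[OF hP] by (blast intro: comp_inj_on inj_on_subset)
  moreover have "(image h \<circ> (p \<circ> e0)) f \<subseteq> underS r a" for f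
    using bij_betw_apply[OF p] bij_betw_apply[OF hP] by simp
  ultimately show ?thesis
    using a by blast
qed

theorem lemma2p1:
  fixes r :: "'k rel" and L :: "'l set" and A :: "('k \<Rightarrow> 'k) set"
  assumes "Card_order r" and "Field r = UNIV" and "infinite (UNIV :: 'k set)"
    and "regularCard r"
    and "infinite L" and "(card_of L, r) \<in> ordLess"
    and "(card_of (Pow L), card_of (Pow (UNIV :: 'k set))) \<in> ordIso"
  shows "\<exists>C :: (('k \<Rightarrow> 'k) \<times> ('k \<Rightarrow> bool)) set.
           closedin (prod_topology (bounded_topology r) (bounded_topology r)) C \<and>
           A = {f. \<exists>g. (f, g) \<in> C}"
proof -
  obtain a and e :: "('k \<Rightarrow> 'k) \<Rightarrow> 'k set" where "inj e" and e_sub: "\<And>f. e f \<subseteq> underS r a"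
    using ex_inj_fun_Pow_underS[OF assms(1,3,6,7)] by blast
  have code_inj: "f = f'" if "\<forall>x \<in> underS r a. (x \<in> e f) = (x \<in> e f')" for f f'
  proof -
    from that e_sub have "e f = e f'"
      by blast
    with \<open>inj e\<close> show ?thesis
      by (simp add: inj_eq)
  qed
  let ?C = "{(f, g). f \<in> A \<and> (\<forall>x \<in> underS r a. g x = (x \<in> e f))}"
  have "closedin (prod_topology (bounded_topology r) (bounded_topology r)) ?C"
    by (intro closedin_coded_graph[OF assms(1-3)] code_inj)
  moreover have "A = {f. \<exists>g. (f, g) \<in> ?C}"
    by auto
  ultimately show ?thesis
    by blast
qed

end
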